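(* Let $\mathcal{D}$ be a distribution over $\mathcal{X}\times\mathcal{Y}$ where $\mathcal{Y}\subseteq\mathbb{R}^d$ and $\|y\|_\infty\le M$ for all $y\in\mathcal{Y}$, let $\alpha>0$, and let $\mathcal{T}$ be a bucketing with width $w=\sqrt{\alpha/M}$. Let $\pi:\mathcal{X}\to\Omega$ be an arbitrary policy and let $h:\mathcal{X}\to\mathcal{Y}$ be an $\alpha$-self-consistent model that is also $\alpha$-consistent with respect to $\pi$. Then \[\mathbb{E}_{\mathcal{D}}[\pi_h(x)\cdot y]\ge \mathbb{E}_{\mathcal{D}}[\pi(x)\cdot y]-4d\sqrt{\alpha M}.\]
   Context: $\Omega\subseteq[0,1]^d$ is an arbitrary feasible set of actions; a policy is a map $\pi:\mathcal{X}\to\Omega$. For a model $h:\mathcal{X}\to\mathcal{Y}$, its induced policy is $\pi_h(x)=\arg\max_{a\in\Omega}a\cdot h(x)$. A bucketing $\mathcal{T}$ of width $w$ is a partition of $[0,1]$ into $1/w$ consecutive intervals $\tau$ of width $w$. A model $h$ is $\alpha$-consistent with respect to a collection $\mathcal{C}\subseteq 2^{\mathcal{X}}$ if for every $C\in\mathcal{C}$, $\|\mathbb{E}_{\mathcal{D}}[y-h(x)\mid x\in C]\|_\infty\le \alpha/\Pr[x\in C]$. The level sets of a policy $\pi$ are $\mathcal{C}^{\mathcal{T}}_\pi=\{\{x:\pi(x)_i\in\tau\}:i\in[d],\tau\in\mathcal{T}\}$. $h$ is $\alpha$-consistent with respect to a policy $\pi$ if it is $\alpha$-consistent with respect to $\mathcal{C}^{\mathcal{T}}_\pi$,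 and $\alpha$-self-consistent if it is $\alpha$-consistent with respect to $\pi_h$. *)

theory Defs
  imports "HOL-Probability.Probability"
begin

definition Pr_in :: "('x \<times> 'y) measure \<Rightarrow> 'x set \<Rightarrow> real" where
  "Pr_in D C = measure D {z \<in> space D. fst z \<in> C}"

text \<open>Conditional mean E[f | x \<in> C] (with Isabelle's convention t / 0 = 0).\<close>
definition cond_mean :: "('x \<times> 'y) measure \<Rightarrow> 'x set \<Rightarrow> ('x \<times> 'y \<Rightarrow> real) \<Rightarrow> real" where
  "cond_mean D C f = (\<integral>z. indicator C (fst z) * f z \<partial>D) / Pr_in D C"

definition consistent_wrt ::
  "('x \<times> (real^'d)) measure \<Rightarrow> real \<Rightarrow> ('x \<Rightarrow> real^'d) \<Rightarrow> 'x set set \<Rightarrow> bool" where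
  "consistent_wrt D \<alpha> h Cs \<longleftrightarrow>
     (\<forall>C\<in>Cs. \<forall>i. \<bar>cond_mean D C (\<lambda>z. snd z $ i - h (fst z) $ i)\<bar> \<le> \<alpha> / Pr_in D C)"

definition bucketing :: "real \<Rightarrow> real set set \<Rightarrow> bool" where
  "bucketing w T \<longleftrightarrow> finite T \<and> real (card T) * w = 1 \<and>
     disjoint T \<and> \<Union>T = {0..1} \<and>
     (\<forall>\<tau>\<in>T. \<exists>a b. b - a = w \<and> {a<..<b} \<subseteq> \<tau> \<and> \<tau> \<subseteq> {a..b})"

definition level_sets :: "real set set \<Rightarrow> ('x \<Rightarrow> real^'d) \<Rightarrow> 'x set set" where
  "level_sets T \<pi> = {{x. \<pi> x $ i \<in> \<tau>} | i \<tau>. \<tau> \<in> T}"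

definition induced_policy :: "(real^'d) set \<Rightarrow> ('x \<Rightarrow> real^'d) \<Rightarrow> ('x \<Rightarrow> real^'d) \<Rightarrow> bool" where
  "induced_policy \<Omega> h p \<longleftrightarrow> (\<forall>x. p x \<in> \<Omega> \<and> (\<forall>a\<in>\<Omega>. a \<bullet> h x \<le> p x \<bullet> h x))"

end

theory Submission imports Defs begin

text \<open>Split \<open>y = h(x) + (y - h(x))\<close>. Since \<open>\<pi>h\<close> maximises \<open>a \<bullet> h(x)\<close> over \<open>\<Omega>\<close>, the
  only loss against \<open>\<pi>\<close> comes from the residuals \<open>E[p(x) \<bullet> (y - h(x))]\<close> for \<open>p = \<pi>, \<pi>h\<close>.
  Round each coordinate \<open>p(x)$i\<close> to the centre of its bucket: this costs at most
  \<open>(w/2) \<cdot> 2M\<close>, and the rounded residual is a combination, with weights in \<open>[0,1]\<close>, of the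
  \<open>1/w\<close> per-bucket biases \<open>E[1{p(x)$i \<in> \<tau>} (y$i - h(x)$i)]\<close>, each at most \<open>\<alpha>\<close> by
  consistency with respect to the level sets of \<open>p\<close>. With \<open>w = sqrt(\<alpha>/M)\<close> both terms equal
  \<open>sqrt(\<alpha> M)\<close>, for each of the \<open>d\<close> coordinates and each of the two policies.\<close>

lemma bucketingD:
  assumes "bucketing w T"
  shows "finite T" and "disjoint T" and "\<Union>T = {0..1}" and "real (card T) * w = 1"
    and "\<And>\<tau>. \<tau> \<in> T \<Longrightarrow> \<exists>a b. b - a = w \<and> {a<..<b} \<subseteq> \<tau> \<and> \<tau> \<subseteq> {a..b}"
  using assms unfolding bucketing_def by (elim conjE; assumption | blast)+

lemma bucketing_width_pos:
  assumes "bucketing w T"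
  shows "w > 0"
proof -
  have "0 < real (card T) * w" using bucketingD(4)[OF assms] by simp
  then show ?thesis by (simp add: zero_less_mult_iff)
qed

lemma bucket_in_borel:
  assumes "bucketing w T" and "\<tau> \<in> T"
  shows "\<tau> \<in> sets borel"
proof -
  obtain a b where "{a<..<b} \<subseteq> \<tau>" "\<tau> \<subseteq> {a..b}"
    using bucketingD(5)[OF assms] by blast
  then have "\<tau> = {a<..<b} \<union> (\<tau> \<inter> {a, b})" by auto
  moreover have "\<tau> \<inter> {a, b} \<in> sets borel"
    by (intro borel_closed finite_imp_closed) auto
  ultimately show ?thesis by (metis sets.Un borel_open open_greaterThanLessThan)
qed

lemma bucketing_sum_indicator:
  fixes f :: "real set \<Rightarrow> real"
  assumes "bucketing w T" and "\<tau>\<^sub>0 \<in> T" and "v \<in> \<tau>\<^sub>0"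
  shows "(\<Sum>\<tau>\<in>T. indicator \<tau> v * f \<tau>) = f \<tau>\<^sub>0"
proof -
  note bucketingD(1,2)[OF assms(1)]
  have "(\<Sum>\<tau>\<in>T. indicator \<tau> v * f \<tau>) = (\<Sum>\<tau>\<in>{\<tau>\<^sub>0}. indicator \<tau> v * f \<tau>)"
  proof (rule sum.mono_neutral_right)
    show "\<forall>\<tau>\<in>T - {\<tau>\<^sub>0}. indicator \<tau> v * f \<tau> = 0"
    proof
      fix \<tau> assume "\<tau> \<in> T - {\<tau>\<^sub>0}"
      then have "v \<notin> \<tau>" using \<open>disjoint T\<close> assms(2,3) unfolding disjoint_def by blast
      then show "indicator \<tau> v * f \<tau> = 0" by simp
    qed
  qed (use \<open>finite T\<close> assms(2) in auto)
  then show ?thesis using assms(3) by simp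
qed

lemma bucketing_centres:
  assumes "bucketing w T"
  obtains c where "\<And>\<tau>. \<tau> \<in> T \<Longrightarrow> c \<tau> \<in> {0..1}"
    and "\<And>\<tau> v. \<tau> \<in> T \<Longrightarrow> v \<in> \<tau> \<Longrightarrow> \<bar>v - c \<tau>\<bar> \<le> w / 2"
proof -
  obtain a b where ab: "\<And>\<tau>. \<tau> \<in> T \<Longrightarrow> b \<tau> - a \<tau> = w \<and> {a \<tau><..<b \<tau>} \<subseteq> \<tau> \<and> \<tau> \<subseteq> {a \<tau>..b \<tau>}"
    using bucketingD(5)[OF assms] by metis
  define c where "c \<tau> = (a \<tau> + b \<tau>) / 2" for \<tau>
  show thesis
  proof
    fix \<tau> assume "\<tau> \<in> T"
    have "c \<tau> \<in> \<tau>"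
      using ab[OF \<open>\<tau> \<in> T\<close>] bucketing_width_pos[OF assms] unfolding c_def by auto
    then show "c \<tau> \<in> {0..1}"
      using bucketingD(3)[OF assms] \<open>\<tau> \<in> T\<close> by blast
  next
    fix \<tau> v assume "\<tau> \<in> T" "v \<in> \<tau>"
    then show "\<bar>v - c \<tau>\<bar> \<le> w / 2"
      using ab[OF \<open>\<tau> \<in> T\<close>] unfolding c_def by (auto simp: abs_if field_simps)
  qed
qed

lemma abs_mult_le_bounds:
  fixes a b :: real
  assumes "\<bar>a\<bar> \<le> A" and "\<bar>b\<bar> \<le> B"
  shows "\<bar>a * b\<bar> \<le> A * B"
  using assms by (simp add: abs_mult mult_mono')

lemma abs_inner_le_card:
  fixes a b :: "real^'n"
  assumes "\<And>i. \<bar>a $ i\<bar> \<le> A" and "\<And>i. \<bar>b $ i\<bar> \<le> B"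
  shows "\<bar>a \<bullet> b\<bar> \<le> real CARD('n) * (A * B)"
proof -
  have "\<bar>a \<bullet> b\<bar> \<le> (\<Sum>i\<in>UNIV. \<bar>a $ i * b $ i\<bar>)"
    unfolding inner_vec_def by (simp add: sum_abs)
  also have "\<dots> \<le> (\<Sum>i\<in>(UNIV :: 'n set). A * B)"
    by (intro sum_mono abs_mult_le_bounds assms)
  finally show ?thesis by simp
qed

lemma (in prob_space) integrable_bounded:
  fixes f :: "'a \<Rightarrow> real"
  assumes "f \<in> borel_measurable M" and "\<And>x. x \<in> space M \<Longrightarrow> \<bar>f x\<bar> \<le> B"
  shows "integrable M f"
  using assms by (intro integrable_const_bound[where B = B]) auto

lemma (in prob_space) abs_integral_le_bound:
  fixes f :: "'a \<Rightarrow> real"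
  assumes "f \<in> borel_measurable M" and "\<And>x. x \<in> space M \<Longrightarrow> \<bar>f x\<bar> \<le> B"
  shows "\<bar>\<integral>x. f x \<partial>M\<bar> \<le> B"
proof -
  have "integrable M (\<lambda>x. \<bar>f x\<bar>)" using integrable_bounded[OF assms] by simp
  then have "(\<integral>x. \<bar>f x\<bar> \<partial>M) \<le> B" using assms(2) by (intro integral_le_const AE_I2)
  then show ?thesis using integral_abs_bound[of M f] by linarith
qed

lemma (in prob_space) bucketed_integral_bound:
  fixes q g :: "'a \<Rightarrow> real"
  assumes T: "bucketing w T"
    and q: "q \<in> borel_measurable M" "\<And>x. x \<in> space M \<Longrightarrow> q x \<in> {0..1}"
    and g: "g \<in> borel_measurable M" "\<And>x. x \<in> space M \<Longrightarrow> \<bar>g x\<bar> \<le> K"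
    and bias: "\<And>\<tau>. \<tau> \<in> T \<Longrightarrow> \<bar>\<integral>x. indicator \<tau> (q x) * g x \<partial>M\<bar> \<le> \<alpha>"
  shows "\<bar>\<integral>x. q x * g x \<partial>M\<bar> \<le> real (card T) * \<alpha> + w / 2 * K"
proof -
  obtain c where c01: "\<And>\<tau>. \<tau> \<in> T \<Longrightarrow> c \<tau> \<in> {0..1}"
    and close: "\<And>\<tau> v. \<tau> \<in> T \<Longrightarrow> v \<in> \<tau> \<Longrightarrow> \<bar>v - c \<tau>\<bar> \<le> w / 2"
    using bucketing_centres[OF T] by blast
  note cover = bucketingD(3)[OF T]
  have ind_meas: "(\<lambda>x. indicator \<tau> (q x) :: real) \<in> borel_measurable M" if "\<tau> \<in> T" for \<tau>
    using measurable_compose[OF q(1) borel_measurable_indicator[OF bucket_in_borel[OF T that]]]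
    by simp
  define r where "r x = q x - (\<Sum>\<tau>\<in>T. indicator \<tau> (q x) * c \<tau>)" for x
  have r_meas: "r \<in> borel_measurable M"
    unfolding r_def using q(1) ind_meas by (intro borel_measurable_diff borel_measurable_sum) auto
  have r_small: "\<bar>r x\<bar> \<le> w / 2" if x: "x \<in> space M" for x
  proof -
    obtain \<tau> where "\<tau> \<in> T" "q x \<in> \<tau>" using cover q(2)[OF x] by blast
    then show ?thesis
      unfolding r_def bucketing_sum_indicator[OF T \<open>\<tau> \<in> T\<close> \<open>q x \<in> \<tau>\<close>] by (rule close)
  qed
  have decomp: "q x * g x = (\<Sum>\<tau>\<in>T. c \<tau> * (indicator \<tau> (q x) * g x)) + r x * g x" for x
    unfolding r_def by (simp add: sum_distrib_left algebra_simps)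
  have bias_int: "integrable M (\<lambda>x. indicator \<tau> (q x) * g x)" if "\<tau> \<in> T" for \<tau>
    using ind_meas[OF that] g
    by (intro integrable_bounded[where B = "1 * K"] abs_mult_le_bounds) auto
  have r_int: "integrable M (\<lambda>x. r x * g x)"
    using r_meas g r_small by (intro integrable_bounded[where B = "w / 2 * K"] abs_mult_le_bounds) auto
  have "(\<integral>x. q x * g x \<partial>M)
      = (\<Sum>\<tau>\<in>T. c \<tau> * (\<integral>x. indicator \<tau> (q x) * g x \<partial>M)) + (\<integral>x. r x * g x \<partial>M)"
    unfolding decomp using bias_int r_int by simp
  moreover have "\<bar>\<Sum>\<tau>\<in>T. c \<tau> * (\<integral>x. indicator \<tau> (q x) * g x \<partial>M)\<bar> \<le> (\<Sum>\<tau>\<in>T. 1 * \<alpha>)"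
    using c01 bias by (intro order.trans[OF sum_abs] sum_mono abs_mult_le_bounds) auto
  moreover have "\<bar>\<integral>x. r x * g x \<partial>M\<bar> \<le> w / 2 * K"
    using r_meas g r_small by (intro abs_integral_le_bound abs_mult_le_bounds) auto
  ultimately show ?thesis by simp
qed

lemma bucketing_sqrt_width_error:
  assumes T: "bucketing (sqrt (\<alpha> / M)) T" and "\<alpha> > 0" and "M \<ge> 0"
  shows "real (card T) * \<alpha> + sqrt (\<alpha> / M) / 2 * (2 * M) = 2 * sqrt (\<alpha> * M)"
proof -
  let ?w = "sqrt (\<alpha> / M)"
  have "M > 0" using bucketing_width_pos[OF T] \<open>M \<ge> 0\<close> by (cases "M = 0") auto
  note card_w = bucketingD(4)[OF T]
  have "sqrt (\<alpha> * M) = sqrt (\<alpha> / M * (M * M))" using \<open>M > 0\<close> by simp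
  also have "\<dots> = ?w * M" using \<open>M > 0\<close> by (simp only: real_sqrt_mult real_sqrt_mult_self abs_of_pos)
  finally have w_M: "?w * M = sqrt (\<alpha> * M)" ..
  have "?w * ?w = \<alpha> / M" using \<open>\<alpha> > 0\<close> \<open>M > 0\<close> by simp
  then have "real (card T) * \<alpha> = real (card T) * ?w * (?w * M)"
    using \<open>M > 0\<close> by (simp add: field_simps)
  also have "\<dots> = sqrt (\<alpha> * M)" using card_w w_M by simp
  finally show ?thesis using w_M by simp
qed

lemma consistent_wrt_integral_bound:
  fixes D :: "('x \<times> (real^'d)) measure"
  assumes "finite_measure D" and "consistent_wrt D \<alpha> h Cs" and "C \<in> Cs"
    and C_meas: "{z \<in> space D. fst z \<in> C} \<in> sets D" and "\<alpha> \<ge> 0"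
  shows "\<bar>\<integral>z. indicator C (fst z) * (snd z $ i - h (fst z) $ i) \<partial>D\<bar> \<le> \<alpha>"
proof -
  define I where "I = (\<integral>z. indicator C (fst z) * (snd z $ i - h (fst z) $ i) \<partial>D)"
  have cons: "\<bar>I / Pr_in D C\<bar> \<le> \<alpha> / Pr_in D C"
    using assms(2,3) unfolding consistent_wrt_def cond_mean_def I_def by blast
  show ?thesis
  proof (cases "Pr_in D C = 0")
    case True
    \<comment> \<open>Here \<open>cons\<close> degenerates to \<open>0 \<le> 0\<close>; instead, \<open>C\<close> is a null set.\<close>
    then have "{z \<in> space D. fst z \<in> C} \<in> null_sets D"
      using assms(1) C_meas unfolding Pr_in_def
      by (simp add: finite_measure.emeasure_eq_measure null_sets_def)
    then have "AE z in D. fst z \<notin> C" by (rule AE_I') auto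
    then have "I = 0" unfolding I_def by (intro integral_eq_zero_AE) auto
    then show ?thesis using \<open>\<alpha> \<ge> 0\<close> unfolding I_def by simp
  next
    case False
    then have "Pr_in D C > 0" unfolding Pr_in_def by (simp add: order_less_le)
    then show ?thesis using cons unfolding I_def by (simp add: abs_divide divide_le_cancel)
  qed
qed

lemma consistent_policy_residual_bound:
  fixes D :: "('x \<times> (real^'d)) measure" and p h :: "'x \<Rightarrow> real^'d"
  assumes "prob_space D" and T: "bucketing w T" and "\<alpha> \<ge> 0"
    and p_meas: "(\<lambda>z. p (fst z)) \<in> borel_measurable D"
    and y_meas: "(\<lambda>z. snd z) \<in> borel_measurable D"
    and h_meas: "(\<lambda>z. h (fst z)) \<in> borel_measurable D"
    and p01: "\<And>x i. p x $ i \<in> {0..1}"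
    and resid: "\<And>z i. z \<in> space D \<Longrightarrow> \<bar>snd z $ i - h (fst z) $ i\<bar> \<le> K"
    and cons: "consistent_wrt D \<alpha> h (level_sets T p)"
  shows "\<bar>\<integral>z. p (fst z) \<bullet> (snd z - h (fst z)) \<partial>D\<bar>
           \<le> real CARD('d) * (real (card T) * \<alpha> + w / 2 * K)"
proof -
  interpret prob_space D by fact
  define q :: "'d \<Rightarrow> 'x \<times> (real^'d) \<Rightarrow> real" where "q i z = p (fst z) $ i" for i z
  define g :: "'d \<Rightarrow> 'x \<times> (real^'d) \<Rightarrow> real" where "g i z = snd z $ i - h (fst z) $ i" for i z
  have q_meas: "q i \<in> borel_measurable D" for i
    unfolding q_def by (rule measurable_compose[OF p_meas borel_measurable_nth])
  have g_meas: "g i \<in> borel_measurable D" for i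
    unfolding g_def using measurable_compose[OF y_meas borel_measurable_nth]
      measurable_compose[OF h_meas borel_measurable_nth] by (rule borel_measurable_diff)
  have coord: "\<bar>\<integral>z. q i z * g i z \<partial>D\<bar> \<le> real (card T) * \<alpha> + w / 2 * K" for i
  proof (rule bucketed_integral_bound[OF T q_meas _ g_meas])
    show "q i z \<in> {0..1}" "\<bar>g i z\<bar> \<le> K" if "z \<in> space D" for z
      using p01 resid[OF that] unfolding q_def g_def by auto
  next
    fix \<tau> assume "\<tau> \<in> T"
    define C where "C = {x. p x $ i \<in> \<tau>}"
    have "C \<in> level_sets T p" unfolding level_sets_def C_def using \<open>\<tau> \<in> T\<close> by blast
    have "{z \<in> space D. fst z \<in> C} = q i -` \<tau> \<inter> space D" unfolding C_def q_def by auto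
    also have "\<dots> \<in> sets D" by (rule measurable_sets[OF q_meas bucket_in_borel[OF T \<open>\<tau> \<in> T\<close>]])
    finally have "{z \<in> space D. fst z \<in> C} \<in> sets D" .
    from consistent_wrt_integral_bound[OF _ cons \<open>C \<in> level_sets T p\<close> this \<open>\<alpha> \<ge> 0\<close>]
    show "\<bar>\<integral>z. indicator \<tau> (q i z) * g i z \<partial>D\<bar> \<le> \<alpha>"
      unfolding C_def q_def g_def indicator_def by (simp add: finite_measure_axioms)
  qed
  have "integrable D (\<lambda>z. q i z * g i z)" for i
    using q_meas g_meas p01 resid unfolding q_def g_def
    by (intro integrable_bounded[where B = "1 * K"] abs_mult_le_bounds) auto
  then have "(\<integral>z. p (fst z) \<bullet> (snd z - h (fst z)) \<partial>D) = (\<Sum>i\<in>UNIV. \<integral>z. q i z * g i z \<partial>D)"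
    unfolding q_def g_def inner_vec_def by simp
  also have "\<bar>\<dots>\<bar> \<le> (\<Sum>i\<in>(UNIV :: 'd set). real (card T) * \<alpha> + w / 2 * K)"
    by (intro order.trans[OF sum_abs] sum_mono coord)
  finally show ?thesis by simp
qed

lemma policy_value_gap:
  fixes D :: "('x \<times> (real^'d)) measure" and p q h :: "'x \<Rightarrow> real^'d"
  assumes "prob_space D"
    and p_meas: "(\<lambda>z. p (fst z)) \<in> borel_measurable D"
    and q_meas: "(\<lambda>z. q (fst z)) \<in> borel_measurable D"
    and h_meas: "(\<lambda>z. h (fst z)) \<in> borel_measurable D"
    and y_meas: "(\<lambda>z. snd z) \<in> borel_measurable D"
    and p_bound: "\<And>x i. \<bar>p x $ i\<bar> \<le> 1" and q_bound: "\<And>x i. \<bar>q x $ i\<bar> \<le> 1"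
    and h_bound: "\<And>x i. \<bar>h x $ i\<bar> \<le> M"
    and y_bound: "\<And>z i. z \<in> space D \<Longrightarrow> \<bar>snd z $ i\<bar> \<le> M"
    and best_response: "\<And>x. p x \<bullet> h x \<le> q x \<bullet> h x"
  shows "(\<integral>z. p (fst z) \<bullet> snd z \<partial>D) - (\<integral>z. q (fst z) \<bullet> snd z \<partial>D)
           \<le> \<bar>\<integral>z. p (fst z) \<bullet> (snd z - h (fst z)) \<partial>D\<bar>
             + \<bar>\<integral>z. q (fst z) \<bullet> (snd z - h (fst z)) \<partial>D\<bar>"
proof -
  interpret prob_space D by fact
  have split: "(\<integral>z. a (fst z) \<bullet> snd z \<partial>D)
      = (\<integral>z. a (fst z) \<bullet> h (fst z) \<partial>D) + (\<integral>z. a (fst z) \<bullet> (snd z - h (fst z)) \<partial>D)"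
    and int: "integrable D (\<lambda>z. a (fst z) \<bullet> h (fst z))"
    if a_meas: "(\<lambda>z. a (fst z)) \<in> borel_measurable D" and a_bound: "\<And>x i. \<bar>a x $ i\<bar> \<le> 1"
    for a :: "'x \<Rightarrow> real^'d"
  proof -
    show int: "integrable D (\<lambda>z. a (fst z) \<bullet> h (fst z))"
      using a_meas h_meas a_bound h_bound
      by (intro integrable_bounded[where B = "real CARD('d) * (1 * M)"] abs_inner_le_card) auto
    have "\<bar>(snd z - h (fst z)) $ i\<bar> \<le> 2 * M" if "z \<in> space D" for z i
      using y_bound[OF that, of i] h_bound[of "fst z" i] by simp
    then have "integrable D (\<lambda>z. a (fst z) \<bullet> (snd z - h (fst z)))"
      using a_meas h_meas y_meas a_bound
      by (intro integrable_bounded[where B = "real CARD('d) * (1 * (2 * M))"] abs_inner_le_card) auto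
    then show "(\<integral>z. a (fst z) \<bullet> snd z \<partial>D)
        = (\<integral>z. a (fst z) \<bullet> h (fst z) \<partial>D) + (\<integral>z. a (fst z) \<bullet> (snd z - h (fst z)) \<partial>D)"
      using int by (subst Bochner_Integration.integral_add[symmetric]) (auto simp: inner_diff_right)
  qed
  have "(\<integral>z. p (fst z) \<bullet> h (fst z) \<partial>D) \<le> (\<integral>z. q (fst z) \<bullet> h (fst z) \<partial>D)"
    using int[OF p_meas p_bound] int[OF q_meas q_bound] best_response by (intro integral_mono)
  then show ?thesis
    using split[OF p_meas p_bound] split[OF q_meas q_bound] by linarith
qed

theorem lemma4:
  fixes D :: "('x \<times> (real^'d)) measure"
    and Y :: "(real^'d) set" and M \<alpha> :: real
    and \<Omega> :: "(real^'d) set" and T :: "real set set"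
    and \<pi> h \<pi>h :: "'x \<Rightarrow> real^'d"
  assumes "prob_space D"
    and "\<forall>z\<in>space D. snd z \<in> Y"
    and "\<forall>y\<in>Y. \<forall>i. \<bar>y $ i\<bar> \<le> M"
    and "\<alpha> > 0"
    and "bucketing (sqrt (\<alpha> / M)) T"
    and "\<forall>a\<in>\<Omega>. \<forall>i. 0 \<le> a $ i \<and> a $ i \<le> 1"
    and "\<forall>x. \<pi> x \<in> \<Omega>"
    and "\<forall>x. h x \<in> Y"
    and "induced_policy \<Omega> h \<pi>h"
    and "(\<lambda>z. snd z) \<in> borel_measurable D"
    and "(\<lambda>z. \<pi> (fst z)) \<in> borel_measurable D"
    and "(\<lambda>z. h (fst z)) \<in> borel_measurable D"
    and "(\<lambda>z. \<pi>h (fst z)) \<in> borel_measurable D"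
    and "consistent_wrt D \<alpha> h (level_sets T \<pi>h)"
    and "consistent_wrt D \<alpha> h (level_sets T \<pi>)"
  shows "(\<integral>z. \<pi>h (fst z) \<bullet> snd z \<partial>D)
           \<ge> (\<integral>z. \<pi> (fst z) \<bullet> snd z \<partial>D) - 4 * real CARD('d) * sqrt (\<alpha> * M)"
proof -
  have y_bound: "\<And>z i. z \<in> space D \<Longrightarrow> \<bar>snd z $ i\<bar> \<le> M"
    and h_bound: "\<And>x i. \<bar>h x $ i\<bar> \<le> M"
    using assms(2,3,8) by blast+
  then have "M \<ge> 0" by (meson abs_ge_zero order_trans)
  have resid: "\<bar>snd z $ i - h (fst z) $ i\<bar> \<le> 2 * M" if "z \<in> space D" for z i
    using y_bound[OF that, of i] h_bound[of "fst z" i] by arith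
  have \<pi>h_best: "\<And>x. \<pi>h x \<in> \<Omega> \<and> \<pi> x \<bullet> h x \<le> \<pi>h x \<bullet> h x"
    using assms(7,9) unfolding induced_policy_def by blast
  have \<pi>_unit: "\<And>x i. \<pi> x $ i \<in> {0..1}" and \<pi>h_unit: "\<And>x i. \<pi>h x $ i \<in> {0..1}"
    using assms(6,7) \<pi>h_best by auto
  have error: "real (card T) * \<alpha> + sqrt (\<alpha> / M) / 2 * (2 * M) = 2 * sqrt (\<alpha> * M)"
    using bucketing_sqrt_width_error[OF assms(5,4) \<open>M \<ge> 0\<close>] .
  have "\<bar>\<integral>z. \<pi> (fst z) \<bullet> (snd z - h (fst z)) \<partial>D\<bar> \<le> real CARD('d) * (2 * sqrt (\<alpha> * M))"
    using consistent_policy_residual_bound[OF assms(1,5) _ assms(11,10,12) \<pi>_unit resid assms(15)]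
      assms(4) error by simp
  moreover have "\<bar>\<integral>z. \<pi>h (fst z) \<bullet> (snd z - h (fst z)) \<partial>D\<bar> \<le> real CARD('d) * (2 * sqrt (\<alpha> * M))"
    using consistent_policy_residual_bound[OF assms(1,5) _ assms(13,10,12) \<pi>h_unit resid assms(14)]
      assms(4) error by simp
  moreover have "(\<integral>z. \<pi> (fst z) \<bullet> snd z \<partial>D) - (\<integral>z. \<pi>h (fst z) \<bullet> snd z \<partial>D)
      \<le> \<bar>\<integral>z. \<pi> (fst z) \<bullet> (snd z - h (fst z)) \<partial>D\<bar> + \<bar>\<integral>z. \<pi>h (fst z) \<bullet> (snd z - h (fst z)) \<partial>D\<bar>"
    using \<pi>_unit \<pi>h_unit \<pi>h_best
    by (intro policy_value_gap[OF assms(1,11,13,12,10) _ _ h_bound y_bound]) (auto simp: abs_le_iff)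
  ultimately show ?thesis by linarith
qed

end
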